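(* Let $m\ge0$, let $f:\mathbb{R}^n\to\mathbb{R}$ be $m$-weakly convex, let $\rho>0$, $\alpha=m+\rho$, $\beta\in(0,1)$, and $x_k\in\mathbb{R}^n$. Let $\tilde f:\mathbb{R}^n\to\mathbb{R}$ be convex with $\tilde f(x)\le f(x)+\frac m2\|x-x_k\|^2$ for all $x$, let $z_{k+1}=\arg\min_x\{\tilde f(x)+\frac{\rho}{2}\|x-x_k\|^2\}$, $\tilde g_{k+1}:=\alpha(x_k-z_{k+1})$ and $\epsilon_{k+1}:=f(z_{k+1})+\frac m2\|z_{k+1}-x_k\|^2-\tilde f(z_{k+1})$. Suppose $$f(x_k)-\Big(f(z_{k+1})+\frac m2\|z_{k+1}-x_k\|^2\Big)\ge\beta\big(f(x_k)-\tilde f(z_{k+1})\big).$$ Then $\tilde g_{k+1}\in\partial_{\epsilon_{k+1}}f(z_{k+1})$ and $$f(z_{k+1})\le f(x_k)-\frac{m+\beta\rho}{\alpha}\cdot\frac{1}{2\alpha}\|\tilde g_{k+1}\|^2,\qquad \epsilon_{k+1}\le\frac{1-\beta}{\beta}\Big(f(x_k)-f(z_{k+1})-\frac{m}{2\alpha^2}\|\tilde g_{k+1}\|^2\Big).$$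
   Context: A function $f$ is $m$-weakly convex ($m\ge 0$) if $x\mapsto f(x)+\frac{m}{2}\|x\|^2$ is convex. For $\epsilon\ge 0$, the $\epsilon$-inexact subdifferential at $x$ is $\partial_\epsilon f(x)=\{v\in\mathbb{R}^n: f(y)\ge f(x)+\langle v,y-x\rangle-\frac{m}{2}\|y-x\|^2-\epsilon\ \ \forall y\in\mathbb{R}^n\}$. *)

theory Defs
  imports "HOL-Analysis.Analysis"
begin

definition weakly_convex :: "real \<Rightarrow> ('a::real_inner \<Rightarrow> real) \<Rightarrow> bool" where
  "weakly_convex m f \<longleftrightarrow> convex_on UNIV (\<lambda>x. f x + m / 2 * norm x ^ 2)"

definition inexact_subdiff ::
  "real \<Rightarrow> ('a::real_inner \<Rightarrow> real) \<Rightarrow> real \<Rightarrow> 'a \<Rightarrow> 'a set" where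
  "inexact_subdiff m f \<epsilon> x =
     {v. \<forall>y. f y \<ge> f x + inner v (y - x) - m / 2 * norm (y - x) ^ 2 - \<epsilon>}"

end

theory Submission
  imports Defs
begin

text \<open>
  Since z minimises the convex function ft + \<rho>/2 |. - xk|^2, the vector \<rho> (xk - z) is a
  subgradient of ft at z. Combining this with ft \<le> f + m/2 |. - xk|^2 and expanding
  |y - xk|^2 around z gives the \<epsilon>-subgradient inequality for g = (m + \<rho>) (xk - z), with the
  gap \<epsilon> of the model at z as the error. The subgradient inequality at y = xk yields
  ft z + \<rho> |z - xk|^2 \<le> ft xk \<le> f xk, and together with the descent test this gives both
  bounds.
\<close>

lemma norm_add_square:
  fixes a b :: "'a::real_inner"
  shows "norm (a + b) ^ 2 = norm a ^ 2 + 2 * inner a b + norm b ^ 2"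
  by (simp add: power2_norm_eq_inner inner_add_left inner_add_right inner_commute)

lemma prox_minimiser_subgradient_with_slack:
  fixes h :: "'a::real_inner \<Rightarrow> real"
  assumes h: "convex_on UNIV h"
    and min: "\<forall>x. h z + \<rho> / 2 * norm (z - c) ^ 2 \<le> h x + \<rho> / 2 * norm (x - c) ^ 2"
    and t: "0 < t" "t \<le> 1"
  shows "h z + \<rho> * inner (c - z) (y - z) \<le> h y + \<rho> / 2 * t * norm (y - z) ^ 2"
proof -
  define w where "w = (1 - t) *\<^sub>R z + t *\<^sub>R y"
  define I where "I = inner (c - z) (y - z)"
  have "w - c = (z - c) + t *\<^sub>R (y - z)"
    by (simp add: w_def algebra_simps)
  moreover have "inner (z - c) (y - z) = - I"
    by (simp add: I_def inner_diff_left)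
  ultimately have "norm (w - c) ^ 2 = norm (z - c) ^ 2 - 2 * t * I + t ^ 2 * norm (y - z) ^ 2"
    by (simp only: norm_add_square) (simp add: power_mult_distrib)
  moreover have "h w \<le> (1 - t) * h z + t * h y"
    using convex_onD[OF h, of t z y] t by (simp add: w_def)
  ultimately have "h z + \<rho> / 2 * norm (z - c) ^ 2
      \<le> (1 - t) * h z + t * h y + \<rho> / 2 * (norm (z - c) ^ 2 - 2 * t * I + t ^ 2 * norm (y - z) ^ 2)"
    using min[rule_format, of w] by simp
  then have "t * (h z + \<rho> * I) \<le> t * (h y + \<rho> / 2 * t * norm (y - z) ^ 2)"
    by (simp add: algebra_simps power2_eq_square)
  then show ?thesis
    using t by (simp add: I_def)
qed

lemma prox_minimiser_subgradient:
  fixes h :: "'a::real_inner \<Rightarrow> real"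
  assumes "convex_on UNIV h"
    and "\<forall>x. h z + \<rho> / 2 * norm (z - c) ^ 2 \<le> h x + \<rho> / 2 * norm (x - c) ^ 2"
    and "\<rho> > 0"
  shows "h z + \<rho> * inner (c - z) (y - z) \<le> h y"
proof (rule field_le_epsilon)
  fix e :: real
  assume "0 < e"
  define K where "K = \<rho> / 2 * norm (y - z) ^ 2"
  define t where "t = min 1 (e / (K + 1))"
  have "K \<ge> 0"
    using \<open>\<rho> > 0\<close> by (simp add: K_def)
  then have t: "0 < t" "t \<le> 1" and "t * K \<le> e"
    using \<open>0 < e\<close> by (auto simp: t_def min_def field_simps intro: order_trans[of _ e])
  with prox_minimiser_subgradient_with_slack[OF assms(1,2) t, of y]
  show "h z + \<rho> * inner (c - z) (y - z) \<le> h y + e"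
    by (simp add: K_def mult.assoc mult.left_commute)
qed

lemma model_subgradient_in_inexact_subdiff:
  fixes f h :: "'a::real_inner \<Rightarrow> real"
  assumes model: "\<forall>x. h x \<le> f x + m / 2 * norm (x - c) ^ 2"
    and subgrad: "\<forall>y. h z + \<rho> * inner (c - z) (y - z) \<le> h y"
  shows "(m + \<rho>) *\<^sub>R (c - z)
    \<in> inexact_subdiff m f (f z + m / 2 * norm (z - c) ^ 2 - h z) z"
  unfolding inexact_subdiff_def
proof (intro CollectI allI)
  fix y
  define I where "I = inner (c - z) (y - z)"
  have "inner (y - z) (z - c) = - I"
    unfolding I_def by (metis inner_commute inner_minus_left minus_diff_eq)
  then have "norm (y - c) ^ 2 = norm (y - z) ^ 2 - 2 * I + norm (z - c) ^ 2"
    using norm_add_square[of "y - z" "z - c"] by simp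
  then have "m / 2 * norm (y - c) ^ 2 = m / 2 * (norm (y - z) ^ 2 - 2 * I + norm (z - c) ^ 2)"
    by simp
  also have "\<dots> = m / 2 * norm (y - z) ^ 2 - m * I + m / 2 * norm (z - c) ^ 2"
    by (simp add: algebra_simps)
  finally have model_expanded: "m / 2 * norm (y - c) ^ 2
      = m / 2 * norm (y - z) ^ 2 - m * I + m / 2 * norm (z - c) ^ 2" .
  have "inner ((m + \<rho>) *\<^sub>R (c - z)) (y - z) = m * I + \<rho> * I"
    by (simp only: I_def inner_scaleR_left distrib_right)
  then show "f z + inner ((m + \<rho>) *\<^sub>R (c - z)) (y - z) - m / 2 * norm (y - z) ^ 2
      - (f z + m / 2 * norm (z - c) ^ 2 - h z) \<le> f y"
    using model[rule_format, of y] subgrad[rule_format, of y] model_expanded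
    unfolding I_def by linarith
qed

lemma descent_test_bounds:
  fixes m \<rho> \<beta> d fx fz hz :: real
  assumes "0 < \<beta>" "0 \<le> \<rho> * d"
    and model_drop: "\<rho> * d \<le> fx - hz"
    and descent: "fx - (fz + m / 2 * d) \<ge> \<beta> * (fx - hz)"
  shows "fz \<le> fx - (m + \<beta> * \<rho>) / 2 * d"
    and "fz + m / 2 * d - hz \<le> (1 - \<beta>) / \<beta> * (fx - fz - m / 2 * d)"
proof -
  have "\<beta> * (\<rho> * d) \<le> \<beta> * (fx - hz)"
    using assms(1) model_drop by simp
  moreover have "0 \<le> \<beta> * (\<rho> * d)"
    using assms(1,2) by simp
  ultimately show "fz \<le> fx - (m + \<beta> * \<rho>) / 2 * d"
    using descent by (simp add: field_simps)
  have "\<beta> * (fz + m / 2 * d - hz) = \<beta> * (fx - hz) - \<beta> * (fx - fz - m / 2 * d)"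
    "(1 - \<beta>) * (fx - fz - m / 2 * d) = (fx - fz - m / 2 * d) - \<beta> * (fx - fz - m / 2 * d)"
    by (simp_all add: field_simps)
  then have "\<beta> * (fz + m / 2 * d - hz) \<le> (1 - \<beta>) * (fx - fz - m / 2 * d)"
    using descent by linarith
  then show "fz + m / 2 * d - hz \<le> (1 - \<beta>) / \<beta> * (fx - fz - m / 2 * d)"
    using assms(1) by (simp add: field_simps)
qed

theorem mainTheorem5:
  fixes f ft :: "real ^ 'n \<Rightarrow> real"
    and m \<rho> \<alpha> \<beta> :: real
    and xk z g :: "real ^ 'n"
    and \<epsilon> :: real
  assumes m: "m \<ge> 0"
    and wc: "weakly_convex m f"
    and rho: "\<rho> > 0"
    and alpha: "\<alpha> = m + \<rho>"
    and beta: "0 < \<beta>" "\<beta> < 1"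
    and ft_convex: "convex_on UNIV ft"
    and ft_le: "\<forall>x. ft x \<le> f x + m / 2 * norm (x - xk) ^ 2"
    and z_def: "is_arg_min (\<lambda>x. ft x + \<rho> / 2 * norm (x - xk) ^ 2) (\<lambda>_. True) z"
    and g_def: "g = \<alpha> *\<^sub>R (xk - z)"
    and eps_def: "\<epsilon> = f z + m / 2 * norm (z - xk) ^ 2 - ft z"
    and descent: "f xk - (f z + m / 2 * norm (z - xk) ^ 2) \<ge> \<beta> * (f xk - ft z)"
  shows "g \<in> inexact_subdiff m f \<epsilon> z
    \<and> f z \<le> f xk - (m + \<beta> * \<rho>) / \<alpha> * (1 / (2 * \<alpha>)) * norm g ^ 2
    \<and> \<epsilon> \<le> (1 - \<beta>) / \<beta> * (f xk - f z - m / (2 * \<alpha> ^ 2) * norm g ^ 2)"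
proof -
  have "\<forall>x. ft z + \<rho> / 2 * norm (z - xk) ^ 2 \<le> ft x + \<rho> / 2 * norm (x - xk) ^ 2"
    using z_def by (auto simp: is_arg_min_def not_less)
  then have subgrad: "\<forall>y. ft z + \<rho> * inner (xk - z) (y - z) \<le> ft y"
    using prox_minimiser_subgradient[OF ft_convex] rho by blast
  define d where "d = norm (z - xk) ^ 2"
  have "0 \<le> \<rho> * d"
    using rho by (simp add: d_def)
  moreover have "\<rho> * d \<le> f xk - ft z"
    using subgrad[rule_format, of xk] ft_le[rule_format, of xk]
    by (simp add: d_def power2_norm_eq_inner inner_commute norm_minus_commute)
  ultimately have bounds: "f z \<le> f xk - (m + \<beta> * \<rho>) / 2 * d"
      "\<epsilon> \<le> (1 - \<beta>) / \<beta> * (f xk - f z - m / 2 * d)"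
    using descent_test_bounds[OF beta(1)] descent eps_def unfolding d_def by blast+
  have "\<alpha> > 0"
    using alpha m rho by simp
  then have "norm g ^ 2 = \<alpha> ^ 2 * d"
    by (simp add: g_def d_def power_mult_distrib norm_minus_commute)
  then have "(m + \<beta> * \<rho>) / \<alpha> * (1 / (2 * \<alpha>)) * norm g ^ 2 = (m + \<beta> * \<rho>) / 2 * d"
    and "m / (2 * \<alpha> ^ 2) * norm g ^ 2 = m / 2 * d"
    using \<open>\<alpha> > 0\<close> by (simp_all add: field_simps power2_eq_square)
  moreover have "g \<in> inexact_subdiff m f \<epsilon> z"
    using model_subgradient_in_inexact_subdiff[OF ft_le subgrad] by (simp add: g_def alpha eps_def)
  ultimately show ?thesis
    using bounds by presburger
qed

end
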